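(* Let $X$ be a compact Riemannian manifold, $T:X\to X$ a diffeomorphism, and $f:X\to\mathbb{R}^\omega$ a continuous cocycle. Then for every $\epsilon>0$ there is a continuous cocycle $g:X\to\mathbb{R}^\omega$ with $\sup_{x\in X} d(f(x),g(x))<\epsilon$ such that the skew-product $T_g(x,v)=(T(x),g(x)+v)$ on $X\times\mathbb{R}^\omega$ is not transitive. In particular, no cocycle $X\to\mathbb{R}^\omega$ is stably transitive in the supremum metric, i.e. the set of transitive cocycles has empty interior.
   Context: $\mathbb{R}^\omega=\prod_{n=1}^\infty\mathbb{R}$ with metric $d(\{a_n\},\{b_n\})=\sum_{n=1}^\infty 2^{-n}\frac{|a_n-b_n|}{1+|a_n-b_n|}$. A map is transitive if some point has dense forward orbit; a cocycle $f$ is transitive if $T_f$ is, and stably transitive if all cocycles sufficiently close to it in the supremum metric $\sup_x d(f(x),g(x))$ are transitive. *)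

theory Defs
  imports "HOL-Analysis.Analysis"
begin

text \<open>The space R^omega = nat => real with the metric
  d(a,b) = sum_n 2^-(n+1) |a n - b n| / (1 + |a n - b n|)
  (index n here corresponds to index n+1 in the paper).\<close>
definition dR :: "(nat \<Rightarrow> real) \<Rightarrow> (nat \<Rightarrow> real) \<Rightarrow> real" where
  "dR a b = (\<Sum>n. (1/2)^(Suc n) * (\<bar>a n - b n\<bar> / (1 + \<bar>a n - b n\<bar>)))"

definition cont_cocycle :: "'a::metric_space set \<Rightarrow> ('a \<Rightarrow> nat \<Rightarrow> real) \<Rightarrow> bool" where
  "cont_cocycle X f \<longleftrightarrow>
     (\<forall>x\<in>X. \<forall>e>0. \<exists>\<delta>>0. \<forall>y\<in>X. dist y x < \<delta> \<longrightarrow> dR (f y) (f x) < e)"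

definition skew :: "('a \<Rightarrow> 'a) \<Rightarrow> ('a \<Rightarrow> nat \<Rightarrow> real) \<Rightarrow> 'a \<times> (nat \<Rightarrow> real) \<Rightarrow> 'a \<times> (nat \<Rightarrow> real)" where
  "skew T g p = (T (fst p), (\<lambda>n. g (fst p) n + snd p n))"

definition transitive_cocycle :: "'a::metric_space set \<Rightarrow> ('a \<Rightarrow> 'a) \<Rightarrow> ('a \<Rightarrow> nat \<Rightarrow> real) \<Rightarrow> bool" where
  "transitive_cocycle X T g \<longleftrightarrow>
     (\<exists>x0\<in>X. \<exists>v0. \<forall>x\<in>X. \<forall>v. \<forall>r>0. \<exists>k::nat.
        dist (fst ((skew T g ^^ k) (x0, v0))) x < r \<and> dR (snd ((skew T g ^^ k) (x0, v0))) v < r)"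

text \<open>sup_x d(f x, g x) < eps, written without Sup to avoid the empty-set convention.\<close>
definition sup_dist_less :: "'a set \<Rightarrow> ('a \<Rightarrow> nat \<Rightarrow> real) \<Rightarrow> ('a \<Rightarrow> nat \<Rightarrow> real) \<Rightarrow> real \<Rightarrow> bool" where
  "sup_dist_less X f g eps \<longleftrightarrow> (\<exists>e<eps. \<forall>x\<in>X. dR (f x) (g x) \<le> e)"

definition stably_transitive :: "'a::metric_space set \<Rightarrow> ('a \<Rightarrow> 'a) \<Rightarrow> ('a \<Rightarrow> nat \<Rightarrow> real) \<Rightarrow> bool" where
  "stably_transitive X T f \<longleftrightarrow>
     (\<exists>\<delta>>0. \<forall>g. cont_cocycle X g \<and> sup_dist_less X f g \<delta> \<longrightarrow> transitive_cocycle X T g)"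

end

theory Submission
  imports Defs
begin

text \<open>Replacing the \<open>N\<close>-th coordinate of a cocycle by \<open>0\<close> moves it by at most \<open>2^-(N+1)\<close>
  in the supremum metric and keeps it continuous, but then the \<open>N\<close>-th coordinate of
  \<open>T_g\<^sup>k(x, v)\<close> equals \<open>v N\<close> for all \<open>k\<close>, so no forward orbit can come close to a point
  whose \<open>N\<close>-th coordinate differs by \<open>1\<close>.\<close>

definition dR_summand :: "(nat \<Rightarrow> real) \<Rightarrow> (nat \<Rightarrow> real) \<Rightarrow> nat \<Rightarrow> real" where
  "dR_summand a b n = (1/2)^(Suc n) * (\<bar>a n - b n\<bar> / (1 + \<bar>a n - b n\<bar>))"

lemma dR_summand_nonneg: "0 \<le> dR_summand a b n"
  unfolding dR_summand_def by simp

lemma dR_summand_le: "dR_summand a b n \<le> (1/2)^(Suc n)"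
  unfolding dR_summand_def by (intro mult_left_le) auto

lemma summable_dR_summand: "summable (dR_summand a b)"
proof (rule summable_comparison_test)
  show "\<exists>N. \<forall>n\<ge>N. norm (dR_summand a b n) \<le> (1/2)^(Suc n)"
    using dR_summand_le dR_summand_nonneg by auto
  show "summable (\<lambda>n. (1/2::real)^(Suc n))"
    using summable_geometric[of "1/2::real"] by (simp add: summable_mult)
qed

lemma dR_eq_suminf: "dR a b = suminf (dR_summand a b)"
  unfolding dR_def dR_summand_def by simp

lemma dR_summand_le_dR: "dR_summand a b N \<le> dR a b"
  unfolding dR_eq_suminf
  using sum_le_suminf[of "dR_summand a b" "{N}"] summable_dR_summand dR_summand_nonneg by auto

lemma dR_le_if_agree_except:
  assumes "\<And>n. n \<noteq> N \<Longrightarrow> a n = b n"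
  shows "dR a b \<le> (1/2)^(Suc N)"
proof -
  let ?h = "\<lambda>n. if n = N then (1/2::real)^(Suc n) else 0"
  have sums: "?h sums (1/2)^(Suc N)"
    using sums_single[of N "\<lambda>n. (1/2::real)^(Suc n)"] .
  have "suminf (dR_summand a b) \<le> suminf ?h"
  proof (rule suminf_le)
    show "dR_summand a b n \<le> ?h n" for n
      using dR_summand_le[of a b n] assms[of n] by (auto simp: dR_summand_def)
  qed (use summable_dR_summand sums sums_summable in blast)+
  then show ?thesis
    using sums sums_unique unfolding dR_eq_suminf by force
qed

lemma dR_fun_upd_zero_le: "dR (a(N := 0)) (b(N := 0)) \<le> dR a b"
  unfolding dR_eq_suminf
proof (rule suminf_le)
  show "dR_summand (a(N := 0)) (b(N := 0)) n \<le> dR_summand a b n" for n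
    using dR_summand_nonneg[of a b n] by (cases "n = N") (simp_all add: dR_summand_def)
qed (rule summable_dR_summand)+

lemma cont_cocycle_fun_upd_zero:
  assumes "cont_cocycle X f"
  shows "cont_cocycle X (\<lambda>x. (f x)(N := 0))"
  unfolding cont_cocycle_def
proof (intro ballI allI impI)
  fix x e
  assume "x \<in> X" "(e::real) > 0"
  with assms obtain \<delta> where "\<delta> > 0" and \<delta>: "\<forall>y\<in>X. dist y x < \<delta> \<longrightarrow> dR (f y) (f x) < e"
    unfolding cont_cocycle_def by blast
  have "dR ((f y)(N := 0)) ((f x)(N := 0)) < e" if "y \<in> X" "dist y x < \<delta>" for y
    using \<delta> that dR_fun_upd_zero_le[of "f y" N "f x"] by force
  with \<open>\<delta> > 0\<close> show "\<exists>\<delta>>0. \<forall>y\<in>X. dist y x < \<delta> \<longrightarrow> dR ((f y)(N := 0)) ((f x)(N := 0)) < e"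
    by blast
qed

lemma sup_dist_less_fun_upd_zero:
  assumes "(1/2)^(Suc N) < \<epsilon>"
  shows "sup_dist_less X f (\<lambda>x. (f x)(N := 0)) \<epsilon>"
  unfolding sup_dist_less_def
proof (intro exI conjI ballI)
  show "dR (f x) ((f x)(N := 0)) \<le> (1/2)^(Suc N)" for x
    by (rule dR_le_if_agree_except) simp
qed (rule assms)

lemma skew_funpow_coordinate:
  assumes "\<And>x. g x N = 0"
  shows "snd ((skew T g ^^ k) p) N = snd p N"
  by (induction k) (auto simp: skew_def assms)

lemma not_transitive_if_coordinate_vanishes:
  assumes "\<And>x. g x N = 0"
  shows "\<not> transitive_cocycle X T g"
proof
  assume "transitive_cocycle X T g"
  then obtain x0 v0 where "x0 \<in> X" and dense: "\<forall>x\<in>X. \<forall>v. \<forall>r>0. \<exists>k::nat.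
      dist (fst ((skew T g ^^ k) (x0, v0))) x < r \<and> dR (snd ((skew T g ^^ k) (x0, v0))) v < r"
    unfolding transitive_cocycle_def by blast
  define v where "v = v0(N := v0 N + 1)"
  define r where "r = (1/2::real)^(Suc N) / 2"
  have "r > 0" by (simp add: r_def)
  with dense \<open>x0 \<in> X\<close> obtain k where close: "dR (snd ((skew T g ^^ k) (x0, v0))) v < r"
    by blast
  have "snd ((skew T g ^^ k) (x0, v0)) N = v0 N"
    using skew_funpow_coordinate[where T = T and k = k and p = "(x0, v0)"] assms by simp
  then have "dR_summand (snd ((skew T g ^^ k) (x0, v0))) v N = r"
    by (simp add: dR_summand_def v_def r_def)
  with dR_summand_le_dR[of "snd ((skew T g ^^ k) (x0, v0))" v N] close show False
    by linarith
qed

lemma not_stably_transitive_if_approximable: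
  assumes "\<forall>\<epsilon>>0. \<exists>g. cont_cocycle X g \<and> sup_dist_less X f g \<epsilon> \<and> \<not> transitive_cocycle X T g"
  shows "\<not> stably_transitive X T f"
  using assms unfolding stably_transitive_def by blast

theorem mainTheorem6:
  fixes X :: "'a::metric_space set" and T :: "'a \<Rightarrow> 'a" and f :: "'a \<Rightarrow> nat \<Rightarrow> real"
  assumes "compact X"
    and "\<exists>T'. homeomorphism X X T T'"
    and "cont_cocycle X f"
  shows "(\<forall>\<epsilon>>0. \<exists>g. cont_cocycle X g \<and> sup_dist_less X f g \<epsilon> \<and> \<not> transitive_cocycle X T g)
         \<and> \<not> stably_transitive X T f"
proof -
  have approx: "\<exists>g. cont_cocycle X g \<and> sup_dist_less X f g \<epsilon> \<and> \<not> transitive_cocycle X T g"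
    if \<epsilon>_pos: "\<epsilon> > 0" for \<epsilon> :: real
  proof -
    obtain N where "(1/2::real)^N < \<epsilon>"
      using real_arch_pow_inv[OF \<epsilon>_pos, of "1/2"] by auto
    then have "(1/2::real)^(Suc N) < \<epsilon>"
      using power_decreasing[of N "Suc N" "1/2::real"] by linarith
    then have "sup_dist_less X f (\<lambda>x. (f x)(N := 0)) \<epsilon>"
      by (rule sup_dist_less_fun_upd_zero)
    moreover have "\<not> transitive_cocycle X T (\<lambda>x. (f x)(N := 0))"
      by (rule not_transitive_if_coordinate_vanishes[where N = N]) simp
    ultimately show ?thesis
      using cont_cocycle_fun_upd_zero[OF assms(3)] by blast
  qed
  then show ?thesis
    using not_stably_transitive_if_approximable by blast
qed

end
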